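(* Let $\Gamma=[\gamma;\zeta;\beta]$ and $\Gamma'=[\gamma;\zeta';\beta]$ be LR-tableaux of the same partition type $(\alpha,\beta,\gamma)$ with entries at most $2$, and let $\Delta,\Delta'$ be arc diagrams of Klein tableaux refining $\Gamma$, $\Gamma'$ respectively. (1) If $\Delta$ is obtained from $\Delta'$ by a single move of type (A) or (B), then $\Gamma=\Gamma'$. (2) If $\Delta$ is obtained from $\Delta'$ by a single move of type (C) or (D), then $\Gamma'\leq_{\rm part}\Gamma$ and $\Gamma\neq\Gamma'$.
   Context: Young diagram conventions: a partition $\lambda$ has columns of lengths $\lambda_1,\lambda_2,\ldots$, rows numbered from the top; $\bar\lambda$ is the conjugate partition. An LR-tableau of type $(\alpha,\beta,\gamma)$ with entries at most $2$ is a filling of the skew diagram $\beta\setminus\gamma$ with $\bar\alpha_1$ entries $1$ and $\bar\alpha_2$ entries $2$, weakly increasing along rows, strictly increasing down columns, and such that for each $c\ge0$ the number of $2$'s in columns to the right of column $c$ is at most the number of $1$'s there. It is encoded as $[\gamma;\zeta;\beta]$ where $\zeta$ is the shape formed by the empty boxes and the boxes $1$. Dominance order on partitions: $\zeta\le\zeta'$ if $\sum_{i=1}^\ell\zeta_i\le\sum_{i=1}^\ell\zeta'_i$ for all $\ell$; then $[\gamma;\zeta;\beta]\leq_{\rm part}[\gamma;\zeta';\beta]$ if $\zeta\le\zeta'$. A Klein tableau is an LR-tableau where each entry $2$ carries a subscript $r$ ($2_r$) such that (a) $1\le r\le m-1$ if it is in row $m$; (b) $r=m-1$ if the box above it contains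 $1$; (c) the number of $2_r$'s is at most the number of $1$'s in row $r$; it refines the LR-tableau obtained by deleting the subscripts. Its arc diagram: an arc $(m,r)$ for each $2_r$ in row $m$, and at each position $r$ as many poles as the number of $1$'s in row $r$ minus the number of arcs ending at $r$. Moves: for $m>n>r>s$, (A) replaces arcs $(m,r),(n,s)$ by $(m,s),(n,r)$; (C) replaces arcs $(m,r),(n,s)$ by $(m,n),(r,s)$; for $m>r>s$, (B) replaces arc $(m,s)$ and pole at $r$ by arc $(m,r)$ and pole at $s$; (D) replaces arc $(m,s)$ and pole at $r$ by pole at $m$ and arc $(r,s)$. *)

theory Defs
  imports Main "HOL-Library.Multiset"
begin

text \<open>Partitions are functions nat => nat; lam i (i >= 1) is the length of column i.
  The value at index 0 is normalised to 0. Boxes are pairs (row m, column i), m, i >= 1.\<close>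

definition is_partition :: "(nat \<Rightarrow> nat) \<Rightarrow> bool" where
  "is_partition lam \<longleftrightarrow> lam 0 = 0 \<and> (\<forall>i j. 1 \<le> i \<longrightarrow> i \<le> j \<longrightarrow> lam j \<le> lam i)
     \<and> finite {i. lam i \<noteq> 0}"

definition conj :: "(nat \<Rightarrow> nat) \<Rightarrow> nat \<Rightarrow> nat" where
  "conj lam k = card {i. 1 \<le> i \<and> k \<le> lam i}"

definition skew :: "(nat \<Rightarrow> nat) \<Rightarrow> (nat \<Rightarrow> nat) \<Rightarrow> (nat \<times> nat) set" where
  "skew lam mu = {(m, i). 1 \<le> i \<and> mu i < m \<and> m \<le> lam i}"

text \<open>In [gamma; zeta; beta] the boxes with entry 1 are zeta \ gamma, those with entry 2 are beta \ zeta.\<close>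
definition ones :: "(nat \<Rightarrow> nat) \<Rightarrow> (nat \<Rightarrow> nat) \<Rightarrow> (nat \<times> nat) set" where
  "ones \<gamma> \<zeta> = skew \<zeta> \<gamma>"

definition twos :: "(nat \<Rightarrow> nat) \<Rightarrow> (nat \<Rightarrow> nat) \<Rightarrow> (nat \<times> nat) set" where
  "twos \<zeta> \<beta> = skew \<beta> \<zeta>"

definition entry :: "(nat \<Rightarrow> nat) \<Rightarrow> (nat \<Rightarrow> nat) \<Rightarrow> nat \<times> nat \<Rightarrow> nat" where
  "entry \<gamma> \<zeta> b = (if b \<in> ones \<gamma> \<zeta> then 1 else 2)"

definition is_LR_tableau ::
  "(nat \<Rightarrow> nat) \<Rightarrow> (nat \<Rightarrow> nat) \<Rightarrow> (nat \<Rightarrow> nat) \<Rightarrow> (nat \<Rightarrow> nat) \<Rightarrow> bool" where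
  "is_LR_tableau \<alpha> \<beta> \<gamma> \<zeta> \<longleftrightarrow>
     is_partition \<alpha> \<and> is_partition \<beta> \<and> is_partition \<gamma> \<and> is_partition \<zeta> \<and>
     (\<forall>i. \<gamma> i \<le> \<zeta> i \<and> \<zeta> i \<le> \<beta> i) \<and>
     (\<forall>m i j. (m, i) \<in> skew \<beta> \<gamma> \<longrightarrow> (m, j) \<in> skew \<beta> \<gamma> \<longrightarrow> i < j
        \<longrightarrow> entry \<gamma> \<zeta> (m, i) \<le> entry \<gamma> \<zeta> (m, j)) \<and>
     (\<forall>m m' i. (m, i) \<in> skew \<beta> \<gamma> \<longrightarrow> (m', i) \<in> skew \<beta> \<gamma> \<longrightarrow> m < m'
        \<longrightarrow> entry \<gamma> \<zeta> (m, i) < entry \<gamma> \<zeta> (m', i)) \<and>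
     card (ones \<gamma> \<zeta>) = conj \<alpha> 1 \<and> card (twos \<zeta> \<beta>) = conj \<alpha> 2 \<and>
     (\<forall>c. card {b \<in> twos \<zeta> \<beta>. snd b > c} \<le> card {b \<in> ones \<gamma> \<zeta>. snd b > c})"

definition ones_in_row :: "(nat \<Rightarrow> nat) \<Rightarrow> (nat \<Rightarrow> nat) \<Rightarrow> nat \<Rightarrow> nat" where
  "ones_in_row \<gamma> \<zeta> r = card {i. (r, i) \<in> ones \<gamma> \<zeta>}"

text \<open>A Klein tableau refining [gamma; zeta; beta]: kappa assigns the subscript to each box with entry 2.\<close>
definition is_Klein_tableau ::
  "(nat \<Rightarrow> nat) \<Rightarrow> (nat \<Rightarrow> nat) \<Rightarrow> (nat \<Rightarrow> nat) \<Rightarrow> (nat \<times> nat \<Rightarrow> nat) \<Rightarrow> bool" where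
  "is_Klein_tableau \<gamma> \<zeta> \<beta> \<kappa> \<longleftrightarrow>
     (\<forall>m i. (m, i) \<in> twos \<zeta> \<beta> \<longrightarrow>
        1 \<le> \<kappa> (m, i) \<and> \<kappa> (m, i) \<le> m - 1 \<and>
        ((m - 1, i) \<in> ones \<gamma> \<zeta> \<longrightarrow> \<kappa> (m, i) = m - 1)) \<and>
     (\<forall>r. card {b \<in> twos \<zeta> \<beta>. \<kappa> b = r} \<le> ones_in_row \<gamma> \<zeta> r)"

type_synonym arc_diagram = "(nat \<times> nat) multiset \<times> nat multiset"

definition arcs_of :: "(nat \<Rightarrow> nat) \<Rightarrow> (nat \<Rightarrow> nat) \<Rightarrow> (nat \<times> nat \<Rightarrow> nat) \<Rightarrow> (nat \<times> nat) multiset" where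
  "arcs_of \<zeta> \<beta> \<kappa> = image_mset (\<lambda>b. (fst b, \<kappa> b)) (mset_set (twos \<zeta> \<beta>))"

text \<open>Arc diagram: an arc (m, r) for each 2_r in row m; at r as many poles as 1s in row r
  minus arcs ending at r.\<close>
definition arc_diagram ::
  "(nat \<Rightarrow> nat) \<Rightarrow> (nat \<Rightarrow> nat) \<Rightarrow> (nat \<Rightarrow> nat) \<Rightarrow> (nat \<times> nat \<Rightarrow> nat) \<Rightarrow> arc_diagram" where
  "arc_diagram \<gamma> \<zeta> \<beta> \<kappa> =
     (arcs_of \<zeta> \<beta> \<kappa>,
      Abs_multiset (\<lambda>r. ones_in_row \<gamma> \<zeta> r - size (filter_mset (\<lambda>a. snd a = r) (arcs_of \<zeta> \<beta> \<kappa>))))"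

text \<open>move_X D' D: D is obtained from D' by a single move of type X.\<close>
definition move_A :: "arc_diagram \<Rightarrow> arc_diagram \<Rightarrow> bool" where
  "move_A D' D \<longleftrightarrow> (\<exists>m n r s. m > n \<and> n > r \<and> r > s \<and>
     {#(m, r), (n, s)#} \<subseteq># fst D' \<and>
     fst D = fst D' - {#(m, r), (n, s)#} + {#(m, s), (n, r)#} \<and> snd D = snd D')"

definition move_C :: "arc_diagram \<Rightarrow> arc_diagram \<Rightarrow> bool" where
  "move_C D' D \<longleftrightarrow> (\<exists>m n r s. m > n \<and> n > r \<and> r > s \<and>
     {#(m, r), (n, s)#} \<subseteq># fst D' \<and>
     fst D = fst D' - {#(m, r), (n, s)#} + {#(m, n), (r, s)#} \<and> snd D = snd D')"

definition move_B :: "arc_diagram \<Rightarrow> arc_diagram \<Rightarrow> bool" where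
  "move_B D' D \<longleftrightarrow> (\<exists>m r s. m > r \<and> r > s \<and>
     (m, s) \<in># fst D' \<and> r \<in># snd D' \<and>
     fst D = fst D' - {#(m, s)#} + {#(m, r)#} \<and> snd D = snd D' - {#r#} + {#s#})"

definition move_D :: "arc_diagram \<Rightarrow> arc_diagram \<Rightarrow> bool" where
  "move_D D' D \<longleftrightarrow> (\<exists>m r s. m > r \<and> r > s \<and>
     (m, s) \<in># fst D' \<and> r \<in># snd D' \<and>
     fst D = fst D' - {#(m, s)#} + {#(r, s)#} \<and> snd D = snd D' - {#r#} + {#m#})"

definition dominated :: "(nat \<Rightarrow> nat) \<Rightarrow> (nat \<Rightarrow> nat) \<Rightarrow> bool" where
  "dominated \<zeta> \<zeta>' \<longleftrightarrow> (\<forall>l. (\<Sum>i = 1..l. \<zeta> i) \<le> (\<Sum>i = 1..l. \<zeta>' i))"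

definition le_part :: "(nat \<Rightarrow> nat) \<times> (nat \<Rightarrow> nat) \<times> (nat \<Rightarrow> nat) \<Rightarrow>
    (nat \<Rightarrow> nat) \<times> (nat \<Rightarrow> nat) \<times> (nat \<Rightarrow> nat) \<Rightarrow> bool" where
  "le_part T T' \<longleftrightarrow> fst T = fst T' \<and> snd (snd T) = snd (snd T') \<and>
     dominated (fst (snd T)) (fst (snd T'))"

end

theory Submission
  imports Defs
begin

text \<open>Read an arc diagram through its multiset of end points: an arc \<open>(m, r)\<close> and a pole at
  \<open>r\<close> each contribute \<open>r\<close>, so \<open>r\<close> occurs as often as there are entries 1 in row \<open>r\<close>,
  namely \<open>conj \<zeta> r - conj \<gamma> r\<close> times. Moves (A) and (B) keep the end points, so \<open>\<zeta>\<close> and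
  \<open>\<zeta>'\<close> have the same conjugate and coincide. Moves (C) and (D) replace one end point \<open>r\<close> by
  a larger one \<open>n\<close>: the conjugate of \<open>\<zeta>\<close> arises from that of \<open>\<zeta>'\<close> by moving a box from
  row \<open>r\<close> down to row \<open>n\<close>. Writing the partial column sums of a partition as sums of
  truncated row lengths of its conjugate shows that this can only increase them.\<close>

lemma is_partition_antimono:
  "is_partition lam \<Longrightarrow> 1 \<le> i \<Longrightarrow> i \<le> j \<Longrightarrow> lam j \<le> lam i"
  unfolding is_partition_def by blast

lemma finite_skew:
  assumes "is_partition lam"
  shows "finite (skew lam mu)"
proof -
  have "skew lam mu \<subseteq> {..lam 1} \<times> {i. lam i \<noteq> 0}"
    using is_partition_antimono[OF assms, of 1] by (fastforce simp: skew_def)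
  moreover have "finite {i. lam i \<noteq> 0}"
    using assms by (simp add: is_partition_def)
  ultimately show ?thesis
    by (meson finite_SigmaI finite_atMost finite_subset)
qed

lemma finite_columns_ge:
  assumes "is_partition lam" "1 \<le> k"
  shows "finite {j. 1 \<le> j \<and> k \<le> lam j}"
  by (rule finite_subset[of _ "{j. lam j \<noteq> 0}"]) (use assms in \<open>auto simp: is_partition_def\<close>)

lemma le_conj_iff:
  assumes lam: "is_partition lam" and "1 \<le> i" "1 \<le> k"
  shows "i \<le> conj lam k \<longleftrightarrow> k \<le> lam i"
proof -
  let ?S = "{j. 1 \<le> j \<and> k \<le> lam j}"
  have fin: "finite ?S"
    using finite_columns_ge[OF lam \<open>1 \<le> k\<close>] .
  show ?thesis
  proof
    assume "k \<le> lam i"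
    have "{1..i} \<subseteq> ?S"
    proof
      fix j
      assume "j \<in> {1..i}"
      then have "lam i \<le> lam j"
        using is_partition_antimono[OF lam] by simp
      with \<open>k \<le> lam i\<close> \<open>j \<in> {1..i}\<close> show "j \<in> ?S" by simp
    qed
    then have "card {1..i} \<le> card ?S"
      by (rule card_mono[OF fin])
    then show "i \<le> conj lam k"
      by (simp add: conj_def)
  next
    assume "i \<le> conj lam k"
    show "k \<le> lam i"
    proof (rule ccontr)
      assume "\<not> k \<le> lam i"
      have "?S \<subseteq> {1..<i}"
      proof
        fix j
        assume j: "j \<in> ?S"
        show "j \<in> {1..<i}"
        proof (rule ccontr)
          assume "j \<notin> {1..<i}"
          with j have "lam j \<le> lam i"
            using is_partition_antimono[OF lam \<open>1 \<le> i\<close>] by simp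
          with j \<open>\<not> k \<le> lam i\<close> show False by simp
        qed
      qed
      then have "conj lam k < i"
        unfolding conj_def using card_mono[of "{1..<i}" ?S] \<open>1 \<le> i\<close> by simp
      with \<open>i \<le> conj lam k\<close> show False by simp
    qed
  qed
qed

lemma rows_conj_ge:
  assumes "is_partition lam" "1 \<le> i"
  shows "{k. 1 \<le> k \<and> i \<le> conj lam k} = {1..lam i}"
  using le_conj_iff[OF assms] by auto

lemma partition_eqI_conj:
  assumes lam: "is_partition lam" and mu: "is_partition mu"
    and conj_eq: "\<And>k. 1 \<le> k \<Longrightarrow> conj lam k = conj mu k"
  shows "lam = mu"
proof
  fix i
  show "lam i = mu i"
  proof (cases "i = 0")
    case True
    then show ?thesis using lam mu by (simp add: is_partition_def)
  next
    case False
    then have "1 \<le> i" by simp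
    have "{1..lam i} = {k. 1 \<le> k \<and> i \<le> conj lam k}"
      using rows_conj_ge[OF lam \<open>1 \<le> i\<close>] by simp
    also have "\<dots> = {k. 1 \<le> k \<and> i \<le> conj mu k}"
      by (intro Collect_cong) (auto simp: conj_eq)
    also have "\<dots> = {1..mu i}"
      using rows_conj_ge[OF mu \<open>1 \<le> i\<close>] .
    finally show ?thesis
      by (metis card_atLeastAtMost diff_Suc_1)
  qed
qed

lemma conj_antimono:
  assumes "is_partition lam" "1 \<le> r" "r \<le> n"
  shows "conj lam n \<le> conj lam r"
  unfolding conj_def
  by (rule card_mono[OF finite_columns_ge[OF assms(1,2)]]) (use assms in auto)

lemma conj_eq_conj_add_ones_in_row:
  assumes "is_partition \<gamma>" "is_partition \<zeta>" "\<forall>i. \<gamma> i \<le> \<zeta> i" "1 \<le> k"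
  shows "conj \<zeta> k = conj \<gamma> k + ones_in_row \<gamma> \<zeta> k"
proof -
  have sub: "{j. 1 \<le> j \<and> k \<le> \<gamma> j} \<subseteq> {j. 1 \<le> j \<and> k \<le> \<zeta> j}"
    using assms(3) le_trans by blast
  have "{i. (k, i) \<in> ones \<gamma> \<zeta>} = {j. 1 \<le> j \<and> k \<le> \<zeta> j} - {j. 1 \<le> j \<and> k \<le> \<gamma> j}"
    by (auto simp: ones_def skew_def)
  then show ?thesis
    unfolding ones_in_row_def conj_def
    using card_Diff_subset[OF finite_columns_ge[OF assms(1,4)] sub]
      card_mono[OF finite_columns_ge[OF assms(2,4)] sub]
    by simp
qed

lemma sum_partition_eq_sum_min_conj:
  assumes lam: "is_partition lam" and "lam 1 \<le> K"
  shows "(\<Sum>i = 1..l. lam i) = (\<Sum>k = 1..K. min l (conj lam k))"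
proof -
  have column: "lam i = (\<Sum>k = 1..K. of_bool (i \<le> conj lam k))" if "i \<in> {1..l}" for i
  proof -
    have "lam i \<le> K"
      using is_partition_antimono[OF lam, of 1 i] that \<open>lam 1 \<le> K\<close> by simp
    then have "{1..K} \<inter> {k. i \<le> conj lam k} = {1..lam i}"
      using le_conj_iff[OF lam] that by auto
    then show ?thesis by simp
  qed
  have row: "(\<Sum>i = 1..l. of_bool (i \<le> c)) = min l c" for c :: nat
  proof -
    have "{1..l} \<inter> {i. i \<le> c} = {1..min l c}" by auto
    then show ?thesis by simp
  qed
  have "(\<Sum>i = 1..l. lam i) = (\<Sum>i = 1..l. \<Sum>k = 1..K. of_bool (i \<le> conj lam k))"
    using column by (rule sum.cong[OF refl])
  also have "\<dots> = (\<Sum>k = 1..K. \<Sum>i = 1..l. of_bool (i \<le> conj lam k))"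
    by (rule sum.swap)
  also have "\<dots> = (\<Sum>k = 1..K. min l (conj lam k))"
    by (simp only: row)
  finally show ?thesis .
qed

lemma sum_le_sum_differing_at_two:
  fixes f g :: "'a \<Rightarrow> nat"
  assumes "finite A" "r \<in> A" "n \<in> A" "r \<noteq> n"
    and "\<And>k. k \<in> A \<Longrightarrow> k \<noteq> r \<Longrightarrow> k \<noteq> n \<Longrightarrow> f k = g k"
    and "f r + f n \<le> g r + g n"
  shows "sum f A \<le> sum g A"
proof -
  have rn: "{r, n} \<subseteq> A" using assms by auto
  have "sum f A = sum f (A - {r, n}) + (f r + f n)"
    using sum.subset_diff[OF rn \<open>finite A\<close>] \<open>r \<noteq> n\<close> by simp
  also have "\<dots> \<le> sum g (A - {r, n}) + (g r + g n)"
    using assms by (auto intro: add_mono sum.cong)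
  also have "\<dots> = sum g A"
    using sum.subset_diff[OF rn \<open>finite A\<close>, of g] \<open>r \<noteq> n\<close> by simp
  finally show ?thesis .
qed

lemma dominated_if_conj_shift:
  assumes lam: "is_partition lam" and mu: "is_partition mu" and "1 \<le> r" "r < n"
    and shift: "\<And>k. 1 \<le> k \<Longrightarrow> conj lam k + of_bool (k = r) = conj mu k + of_bool (k = n)"
  shows "dominated mu lam"
  unfolding dominated_def
proof
  fix l
  let ?K = "lam 1 + mu 1 + n"
  have "conj lam n \<le> conj lam r"
    using conj_antimono[OF lam \<open>1 \<le> r\<close>] \<open>r < n\<close> by simp
  moreover have "conj lam n = conj mu n + 1"
    using shift[of n] \<open>1 \<le> r\<close> \<open>r < n\<close> by simp
  moreover have "conj lam r + 1 = conj mu r"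
    using shift[OF \<open>1 \<le> r\<close>] \<open>r < n\<close> by simp
  ultimately have at_r_n:
    "min l (conj mu r) + min l (conj mu n) \<le> min l (conj lam r) + min l (conj lam n)"
    by (simp add: min_def)
  have elsewhere: "min l (conj mu k) = min l (conj lam k)"
    if "k \<in> {1..?K}" "k \<noteq> r" "k \<noteq> n" for k
    using shift[of k] that by simp
  have "(\<Sum>k = 1..?K. min l (conj mu k)) \<le> (\<Sum>k = 1..?K. min l (conj lam k))"
    by (rule sum_le_sum_differing_at_two[OF _ _ _ _ elsewhere at_r_n])
      (use \<open>1 \<le> r\<close> \<open>r < n\<close> in auto)
  then show "(\<Sum>i = 1..l. mu i) \<le> (\<Sum>i = 1..l. lam i)"
    using sum_partition_eq_sum_min_conj[OF lam, of ?K l]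
      sum_partition_eq_sum_min_conj[OF mu, of ?K l]
    by simp
qed

definition endpoints :: "arc_diagram \<Rightarrow> nat multiset" where
  "endpoints D = image_mset snd (fst D) + snd D"

text \<open>The truncated subtraction in the pole count of \<open>arc_diagram\<close> is harmless because
  the Klein condition (c) bounds the arcs ending at \<open>r\<close> by the 1s in row \<open>r\<close>.\<close>

lemma count_endpoints_arc_diagram:
  assumes LR: "is_LR_tableau \<alpha> \<beta> \<gamma> \<zeta>" and K: "is_Klein_tableau \<gamma> \<zeta> \<beta> \<kappa>"
  shows "count (endpoints (arc_diagram \<gamma> \<zeta> \<beta> \<kappa>)) r = ones_in_row \<gamma> \<zeta> r"
proof -
  have \<beta>: "is_partition \<beta>" and \<zeta>: "is_partition \<zeta>"
    using LR by (auto simp: is_LR_tableau_def)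
  let ?A = "arcs_of \<zeta> \<beta> \<kappa>"
  let ?ending = "\<lambda>r. size (filter_mset (\<lambda>a. snd a = r) ?A)"
  let ?poles = "\<lambda>r. ones_in_row \<gamma> \<zeta> r - ?ending r"
  have "?ending r = card {b \<in> twos \<zeta> \<beta>. \<kappa> b = r}" for r
    using finite_skew[OF \<beta>] unfolding arcs_of_def twos_def
    by (simp add: filter_mset_image_mset)
  then have ending_le: "?ending r \<le> ones_in_row \<gamma> \<zeta> r" for r
    using K by (simp add: is_Klein_tableau_def)
  have "{r. 0 < ?poles r} \<subseteq> {..\<zeta> 1}"
  proof
    fix r
    assume "r \<in> {r. 0 < ?poles r}"
    then have "card {i. (r, i) \<in> ones \<gamma> \<zeta>} \<noteq> 0"
      unfolding ones_in_row_def by simp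
    then obtain i where "(r, i) \<in> ones \<gamma> \<zeta>"
      by (metis card.empty empty_Collect_eq)
    then have "1 \<le> i" "r \<le> \<zeta> i"
      by (auto simp: ones_def skew_def)
    then show "r \<in> {..\<zeta> 1}"
      using is_partition_antimono[OF \<zeta>, of 1 i] by simp
  qed
  then have "finite {r. 0 < ?poles r}"
    by (rule finite_subset) simp
  then have "count (Abs_multiset ?poles) r = ?poles r"
    by (simp add: count_Abs_multiset)
  moreover have "count (image_mset snd ?A) r = ?ending r"
    by (simp add: count_conv_size_mset filter_mset_image_mset)
  ultimately show ?thesis
    unfolding endpoints_def arc_diagram_def using ending_le[of r] by simp
qed

lemma conj_eq_conj_add_count_endpoints:
  assumes LR: "is_LR_tableau \<alpha> \<beta> \<gamma> \<zeta>" and K: "is_Klein_tableau \<gamma> \<zeta> \<beta> \<kappa>" and "1 \<le> k"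
  shows "conj \<zeta> k = conj \<gamma> k + count (endpoints (arc_diagram \<gamma> \<zeta> \<beta> \<kappa>)) k"
  using LR \<open>1 \<le> k\<close>
  by (simp add: count_endpoints_arc_diagram[OF LR K] conj_eq_conj_add_ones_in_row
      is_LR_tableau_def)

lemma endpoints_move_A:
  assumes "move_A D' D"
  shows "endpoints D = endpoints D'"
proof -
  obtain m n r s where sub: "{#(m, r), (n, s)#} \<subseteq># fst D'"
    and D: "fst D = fst D' - {#(m, r), (n, s)#} + {#(m, s), (n, r)#}" "snd D = snd D'"
    using assms unfolding move_A_def by blast
  obtain Q where "fst D' = Q + {#(m, r), (n, s)#}"
    using sub by (metis subset_mset.diff_add add.commute)
  then show ?thesis
    unfolding endpoints_def D by simp
qed

lemma endpoints_move_B: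
  assumes "move_B D' D"
  shows "endpoints D = endpoints D'"
proof -
  obtain m r s where "(m, s) \<in># fst D'" "r \<in># snd D'"
    and D: "fst D = fst D' - {#(m, s)#} + {#(m, r)#}" "snd D = snd D' - {#r#} + {#s#}"
    using assms unfolding move_B_def by blast
  then obtain Q P where "fst D' = add_mset (m, s) Q" "snd D' = add_mset r P"
    by (meson multi_member_split)
  then show ?thesis
    unfolding endpoints_def D by simp
qed

lemma endpoints_move_C:
  assumes "move_C D' D"
  shows "\<exists>r n. 1 \<le> r \<and> r < n \<and> endpoints D + {#r#} = endpoints D' + {#n#}"
proof -
  obtain m n r s where "n > r" "r > s" and sub: "{#(m, r), (n, s)#} \<subseteq># fst D'"
    and D: "fst D = fst D' - {#(m, r), (n, s)#} + {#(m, n), (r, s)#}" "snd D = snd D'"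
    using assms unfolding move_C_def by blast
  obtain Q where "fst D' = Q + {#(m, r), (n, s)#}"
    using sub by (metis subset_mset.diff_add add.commute)
  then have "endpoints D + {#r#} = endpoints D' + {#n#}"
    unfolding endpoints_def D by (simp add: ac_simps)
  with \<open>n > r\<close> \<open>r > s\<close> show ?thesis
    by (intro exI[of _ r] exI[of _ n]) simp
qed

lemma endpoints_move_D:
  assumes "move_D D' D"
  shows "\<exists>r n. 1 \<le> r \<and> r < n \<and> endpoints D + {#r#} = endpoints D' + {#n#}"
proof -
  obtain m r s where "m > r" "r > s" "(m, s) \<in># fst D'" "r \<in># snd D'"
    and D: "fst D = fst D' - {#(m, s)#} + {#(r, s)#}" "snd D = snd D' - {#r#} + {#m#}"
    using assms unfolding move_D_def by blast
  then obtain Q P where "fst D' = add_mset (m, s) Q" "snd D' = add_mset r P"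
    by (meson multi_member_split)
  then have "endpoints D + {#r#} = endpoints D' + {#m#}"
    unfolding endpoints_def D by simp
  with \<open>m > r\<close> \<open>r > s\<close> show ?thesis
    by (intro exI[of _ r] exI[of _ m]) simp
qed

theorem lemma2p5:
  fixes \<alpha> \<beta> \<gamma> \<zeta> \<zeta>' :: "nat \<Rightarrow> nat" and \<kappa> \<kappa>' :: "nat \<times> nat \<Rightarrow> nat"
  assumes "is_LR_tableau \<alpha> \<beta> \<gamma> \<zeta>" and "is_LR_tableau \<alpha> \<beta> \<gamma> \<zeta>'"
    and "is_Klein_tableau \<gamma> \<zeta> \<beta> \<kappa>" and "is_Klein_tableau \<gamma> \<zeta>' \<beta> \<kappa>'"
  shows "((move_A (arc_diagram \<gamma> \<zeta>' \<beta> \<kappa>') (arc_diagram \<gamma> \<zeta> \<beta> \<kappa>)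
           \<or> move_B (arc_diagram \<gamma> \<zeta>' \<beta> \<kappa>') (arc_diagram \<gamma> \<zeta> \<beta> \<kappa>))
           \<longrightarrow> (\<gamma>, \<zeta>, \<beta>) = (\<gamma>, \<zeta>', \<beta>))
       \<and> ((move_C (arc_diagram \<gamma> \<zeta>' \<beta> \<kappa>') (arc_diagram \<gamma> \<zeta> \<beta> \<kappa>)
           \<or> move_D (arc_diagram \<gamma> \<zeta>' \<beta> \<kappa>') (arc_diagram \<gamma> \<zeta> \<beta> \<kappa>))
           \<longrightarrow> le_part (\<gamma>, \<zeta>', \<beta>) (\<gamma>, \<zeta>, \<beta>) \<and> (\<gamma>, \<zeta>, \<beta>) \<noteq> (\<gamma>, \<zeta>', \<beta>))"
proof -
  let ?D = "arc_diagram \<gamma> \<zeta> \<beta> \<kappa>" and ?D' = "arc_diagram \<gamma> \<zeta>' \<beta> \<kappa>'"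
  have \<zeta>: "is_partition \<zeta>" and \<zeta>': "is_partition \<zeta>'"
    using assms(1,2) by (auto simp: is_LR_tableau_def)
  have conj_diff: "conj \<zeta> k + count (endpoints ?D') k = conj \<zeta>' k + count (endpoints ?D) k"
    if "1 \<le> k" for k
    using conj_eq_conj_add_count_endpoints[OF assms(1,3) that]
      conj_eq_conj_add_count_endpoints[OF assms(2,4) that] by simp
  have "\<zeta> = \<zeta>'" if AB: "move_A ?D' ?D \<or> move_B ?D' ?D"
  proof (rule partition_eqI_conj[OF \<zeta> \<zeta>'])
    have "endpoints ?D = endpoints ?D'"
      using AB endpoints_move_A endpoints_move_B by blast
    then show "conj \<zeta> k = conj \<zeta>' k" if "1 \<le> k" for k
      using conj_diff[OF that] by simp
  qed
  moreover have "dominated \<zeta>' \<zeta> \<and> \<zeta> \<noteq> \<zeta>'" if CD: "move_C ?D' ?D \<or> move_D ?D' ?D"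
  proof -
    obtain r n where "1 \<le> r" "r < n" and ends: "endpoints ?D + {#r#} = endpoints ?D' + {#n#}"
      using CD endpoints_move_C endpoints_move_D by blast
    have shift: "conj \<zeta> k + of_bool (k = r) = conj \<zeta>' k + of_bool (k = n)" if "1 \<le> k" for k
    proof -
      have "count (endpoints ?D) k + of_bool (k = r) = count (endpoints ?D') k + of_bool (k = n)"
        using arg_cong[OF ends, of "\<lambda>M. count M k"] by (cases "k = r"; cases "k = n") auto
      with conj_diff[OF that] show ?thesis by linarith
    qed
    have "conj \<zeta> n \<noteq> conj \<zeta>' n"
      using shift[of n] \<open>1 \<le> r\<close> \<open>r < n\<close> by simp
    then show ?thesis
      using dominated_if_conj_shift[OF \<zeta> \<zeta>' \<open>1 \<le> r\<close> \<open>r < n\<close> shift] by auto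
  qed
  ultimately show ?thesis
    by (simp add: le_part_def)
qed

end
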